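(* Let $n\ge2$, $q\in\mathbb C$ a primitive $n$-th root of unity, and $u_q(sl_2)$ the $\mathbb C$-algebra with generators $K,E,F$ and relations $K^n=1$, $E^n=F^n=0$, $EK=qKE$, $FK=q^{-1}KF$, $EF-FE=\frac{K-K^{-1}}{q-q^{-1}}$, with basis $\{K^iF^jE^k:0\le i,j,k\le n-1\}$. Let $\int$ be the linear functional with $\int KF^{n-1}E^{n-1}=1$ and zero on all other basis monomials, giving the standard Frobenius form $(a,b)=\int ab$. For an invertible $u\in u_q(sl_2)$ consider the twisted Frobenius form $(a,b)_u:=\int uab$, with inverse $g_u=\sum g_u^1\otimes g_u^2$ and $\ell_u:=\sum g_u^1g_u^2$. Then $\ell_u$ depends only on the component of $u^{-1}$ in $u_q(sl_2)_0$: if $u,v$ are invertible and $u^{-1}$ and $v^{-1}$ have the same component in $u_q(sl_2)_0$, then $\ell_u=\ell_v$.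
   Context: For a Frobenius form $(\ ,\ )$ (bilinear, $(ab,c)=(a,bc)$, nondegenerate), its inverse is $g=\sum g^1\otimes g^2$ with $\sum(a,g^1)g^2=a=\sum g^1(g^2,a)$ for all $a$. The $\mathbb Z/n\mathbb Z$-grading of $u_q(sl_2)$ gives the basis monomial $K^iF^jE^k$ degree $j-k$ mod $n$; $u_q(sl_2)_0$ is the degree-$0$ part, i.e. the span of the monomials $K^iF^jE^j$, and the component of an element in $u_q(sl_2)_0$ is its projection onto this span along the other graded parts. *)

theory Defs
  imports Complex_Main
begin

definition idx :: "nat \<Rightarrow> (nat \<times> nat \<times> nat) set" where
  "idx n = {..<n} \<times> {..<n} \<times> {..<n}"

definition mono :: "'a::ring_1 \<Rightarrow> 'a \<Rightarrow> 'a \<Rightarrow> nat \<times> nat \<times> nat \<Rightarrow> 'a" where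
  "mono K F E m = (case m of (i, j, k) \<Rightarrow> K ^ i * F ^ j * E ^ k)"

text \<open>Complex scalars act on the algebra through the central unital embedding emb.\<close>
definition lincomb :: "(complex \<Rightarrow> 'a::ring_1) \<Rightarrow> nat \<Rightarrow> 'a \<Rightarrow> 'a \<Rightarrow> 'a
    \<Rightarrow> (nat \<times> nat \<times> nat \<Rightarrow> complex) \<Rightarrow> 'a" where
  "lincomb emb n K F E c = (\<Sum>m\<in>idx n. emb (c m) * mono K F E m)"

definition is_pbw_basis :: "(complex \<Rightarrow> 'a::ring_1) \<Rightarrow> nat \<Rightarrow> 'a \<Rightarrow> 'a \<Rightarrow> 'a \<Rightarrow> bool" where
  "is_pbw_basis emb n K F E \<longleftrightarrow>
     (\<forall>x. \<exists>!c. (\<forall>m. m \<notin> idx n \<longrightarrow> c m = 0) \<and> x = lincomb emb n K F E c)"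

definition coord :: "(complex \<Rightarrow> 'a::ring_1) \<Rightarrow> nat \<Rightarrow> 'a \<Rightarrow> 'a \<Rightarrow> 'a \<Rightarrow> 'a
    \<Rightarrow> nat \<times> nat \<times> nat \<Rightarrow> complex" where
  "coord emb n K F E x =
     (THE c. (\<forall>m. m \<notin> idx n \<longrightarrow> c m = 0) \<and> x = lincomb emb n K F E c)"

definition integral_uq :: "(complex \<Rightarrow> 'a::ring_1) \<Rightarrow> nat \<Rightarrow> 'a \<Rightarrow> 'a \<Rightarrow> 'a \<Rightarrow> 'a \<Rightarrow> complex" where
  "integral_uq emb n K F E x = coord emb n K F E x (1, n - 1, n - 1)"

definition twform :: "(complex \<Rightarrow> 'a::ring_1) \<Rightarrow> nat \<Rightarrow> 'a \<Rightarrow> 'a \<Rightarrow> 'a \<Rightarrow> 'a \<Rightarrow> 'a \<Rightarrow> 'a \<Rightarrow> complex" where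
  "twform emb n K F E u a b = integral_uq emb n K F E (u * a * b)"

text \<open>A finite list of pairs gs represents the inverse g = sum g1 (x) g2 of a bilinear form B.\<close>
definition is_form_inverse :: "(complex \<Rightarrow> 'a::ring_1) \<Rightarrow> ('a \<Rightarrow> 'a \<Rightarrow> complex) \<Rightarrow> ('a \<times> 'a) list \<Rightarrow> bool" where
  "is_form_inverse emb B gs \<longleftrightarrow>
     (\<forall>a. (\<Sum>(g1, g2)\<leftarrow>gs. emb (B a g1) * g2) = a \<and>
          (\<Sum>(g1, g2)\<leftarrow>gs. g1 * emb (B g2 a)) = a)"

definition ell :: "('a::ring_1 \<times> 'a) list \<Rightarrow> 'a" where
  "ell gs = (\<Sum>(g1, g2)\<leftarrow>gs. g1 * g2)"

text \<open>Projection onto u_q(sl_2)_0 = span of K^i F^j E^j.\<close>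
definition deg0 :: "(complex \<Rightarrow> 'a::ring_1) \<Rightarrow> nat \<Rightarrow> 'a \<Rightarrow> 'a \<Rightarrow> 'a \<Rightarrow> 'a \<Rightarrow> 'a" where
  "deg0 emb n K F E x =
     (\<Sum>m\<in>{m\<in>idx n. fst (snd m) = snd (snd m)}. emb (coord emb n K F E x m) * mono K F E m)"

end

theory Submission
  imports Defs
begin

text \<open>
  Let \<open>g\<^sub>1\<close> be the inverse of the untwisted form \<open>(a, b) = \<integral>ab\<close>. Since
  \<open>(a, b)\<^sub>u = (ua, b)\<close>, the inverse of the twisted form is \<open>\<Sum> g\<^sub>1\<^sup>1 \<otimes> u\<^sup>-\<^sup>1 g\<^sub>1\<^sup>2\<close>, so
  \<open>\<ell>\<^sub>u = \<tau>(u\<^sup>-\<^sup>1)\<close> for the Higman map \<open>\<tau>(x) = \<Sum> g\<^sub>1\<^sup>1 x g\<^sub>1\<^sup>2\<close>. The integral satisfies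
  \<open>\<integral>xK = \<integral>Kx\<close>, which makes \<open>\<tau>(Kx) = \<tau>(xK)\<close>. A monomial \<open>x = K\<^sup>iF\<^sup>jE\<^sup>k\<close> satisfies
  \<open>xK = q\<^sup>k\<^sup>-\<^sup>j Kx\<close>, so \<open>\<tau>(Kx) = q\<^sup>k\<^sup>-\<^sup>j \<tau>(Kx)\<close>, and \<open>\<tau>\<close> kills every monomial with
  \<open>j \<noteq> k\<close>. Hence \<open>\<tau>(x)\<close> only depends on the degree-0 component of \<open>x\<close>.
\<close>

lemma sum_list_swap:
  "(\<Sum>x\<leftarrow>xs. \<Sum>y\<leftarrow>ys. f x y) = (\<Sum>y\<leftarrow>ys. \<Sum>x\<leftarrow>xs. f x y :: 'a::comm_monoid_add)"
  by (induction xs) (simp_all add: sum_list_addf)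

lemma is_form_inverseD:
  assumes "is_form_inverse emb B gs"
  shows "(\<Sum>p\<leftarrow>gs. emb (B a (fst p)) * snd p) = a"
    and "(\<Sum>p\<leftarrow>gs. fst p * emb (B (snd p) a)) = a"
  using assms unfolding is_form_inverse_def by (simp_all add: case_prod_unfold)

lemma is_form_inverse_ell_unique:
  assumes g: "is_form_inverse emb B gs" and h: "is_form_inverse emb B hs"
  shows "ell gs = ell hs"
proof -
  have "ell gs = (\<Sum>p\<leftarrow>gs. (\<Sum>r\<leftarrow>hs. fst r * emb (B (snd r) (fst p))) * snd p)"
    unfolding ell_def by (simp add: case_prod_unfold is_form_inverseD(2)[OF h])
  also have "\<dots> = (\<Sum>r\<leftarrow>hs. \<Sum>p\<leftarrow>gs. fst r * (emb (B (snd r) (fst p)) * snd p))"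
    by (simp add: sum_list_mult_const[symmetric] mult.assoc sum_list_swap[where xs = gs])
  also have "\<dots> = ell hs"
    unfolding ell_def
    by (simp add: case_prod_unfold sum_list_const_mult is_form_inverseD(1)[OF g])
  finally show ?thesis .
qed

lemma is_form_inverse_twist:
  assumes g: "is_form_inverse emb B gs"
    and B': "\<And>a b. B' a b = B (s * a) b"
    and ts: "t * s = 1" and st: "s * t = 1"
    and t_central: "\<And>c. emb c * t = t * emb c"
  shows "is_form_inverse emb B' (map (\<lambda>(a, b). (a, t * b)) gs)"
proof -
  have "(\<Sum>p\<leftarrow>gs. emb (B' a (fst p)) * (t * snd p)) = a" for a
  proof -
    have "(\<Sum>p\<leftarrow>gs. emb (B' a (fst p)) * (t * snd p))
        = t * (\<Sum>p\<leftarrow>gs. emb (B (s * a) (fst p)) * snd p)"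
      by (simp add: B' sum_list_const_mult[symmetric] t_central mult.assoc[symmetric])
    also have "\<dots> = a"
      by (simp add: is_form_inverseD(1)[OF g] mult.assoc[symmetric] ts)
    finally show ?thesis .
  qed
  moreover have "B' (t * x) a = B x a" for x a
    by (simp add: B' mult.assoc[symmetric] st)
  ultimately show ?thesis
    unfolding is_form_inverse_def
    by (simp add: case_prod_unfold o_def is_form_inverseD(2)[OF g])
qed

definition higman_map :: "('a::ring_1 \<times> 'a) list \<Rightarrow> 'a \<Rightarrow> 'a" where
  "higman_map gs x = (\<Sum>(g1, g2)\<leftarrow>gs. g1 * x * g2)"

lemma ell_twist: "ell (map (\<lambda>(a, b). (a, t * b)) gs) = higman_map gs t"
  unfolding ell_def higman_map_def by (simp add: case_prod_unfold o_def mult.assoc)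

lemma higman_map_add: "higman_map gs (x + y) = higman_map gs x + higman_map gs y"
  unfolding higman_map_def by (simp add: case_prod_unfold algebra_simps sum_list_addf)

lemma higman_map_sum:
  "finite A \<Longrightarrow> higman_map gs (\<Sum>a\<in>A. f a) = (\<Sum>a\<in>A. higman_map gs (f a))"
proof (induction A rule: finite_induct)
  case empty
  show ?case by (simp add: higman_map_def case_prod_unfold)
qed (simp add: higman_map_add)

locale central_embedding =
  fixes emb :: "complex \<Rightarrow> 'a::ring_1"
  assumes emb_add: "emb (x + y) = emb x + emb y"
    and emb_mult: "emb (x * y) = emb x * emb y"
    and emb_one: "emb 1 = 1"
    and emb_central: "emb c * a = a * emb c"
begin

lemma emb_zero: "emb 0 = 0"
  using emb_add[of 0 0] by simp

lemma emb_diff: "emb (x - y) = emb x - emb y"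
  using emb_add[of "x - y" y] by (simp add: algebra_simps)

lemma mult_emb_left_commute: "a * (emb c * b) = emb c * (a * b)"
  by (metis emb_central mult.assoc)

lemma emb_fixed_eq_zero:
  assumes "emb r * x = x" and "r \<noteq> 1"
  shows "x = 0"
proof -
  have "emb (1 - r) * x = 0"
    using assms(1) by (simp add: emb_diff emb_one left_diff_distrib)
  then have "emb (inverse (1 - r) * (1 - r)) * x = 0"
    by (simp add: emb_mult mult.assoc)
  then show ?thesis using assms(2) by (simp add: emb_one)
qed

lemma power_skew_commute:
  assumes "x * k = emb c * k * x"
  shows "x ^ m * k = emb (c ^ m) * k * x ^ m"
proof (induction m)
  case 0
  show ?case by (simp add: emb_one)
next
  case (Suc m)
  have "x ^ Suc m * k = x * (emb (c ^ m) * k * x ^ m)"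
    by (simp add: Suc mult.assoc)
  also have "\<dots> = emb (c ^ m) * ((x * k) * x ^ m)"
    by (simp add: mult.assoc mult_emb_left_commute)
  also have "\<dots> = (emb (c ^ m) * emb c) * k * (x * x ^ m)"
    by (simp only: assms mult.assoc)
  also have "emb (c ^ m) * emb c = emb (c ^ Suc m)"
    by (simp add: emb_mult[symmetric] mult.commute)
  finally show ?case by simp
qed

lemma higman_map_smult: "higman_map gs (emb c * x) = emb c * higman_map gs x"
  by (induction gs)
    (simp_all add: higman_map_def case_prod_unfold distrib_left mult.assoc mult_emb_left_commute)

lemma higman_map_commute:
  assumes g: "is_form_inverse emb B gs"
    and B_k: "\<And>a b. B b (a * k) = B (k * b) a"
  shows "higman_map gs (k * y) = higman_map gs (y * k)"
proof -
  have "higman_map gs (k * y) = (\<Sum>p\<leftarrow>gs. (fst p * k) * y * snd p)"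
    unfolding higman_map_def by (simp add: case_prod_unfold mult.assoc)
  also have "\<dots> = (\<Sum>p\<leftarrow>gs. (\<Sum>r\<leftarrow>gs. fst r * emb (B (snd r) (fst p * k))) * y * snd p)"
    by (simp only: is_form_inverseD(2)[OF g])
  also have "\<dots> = (\<Sum>p\<leftarrow>gs. \<Sum>r\<leftarrow>gs. fst r * y * (emb (B (k * snd r) (fst p)) * snd p))"
    by (simp add: sum_list_mult_const[symmetric] B_k mult.assoc emb_central[of _ y])
  also have "\<dots> = (\<Sum>r\<leftarrow>gs. \<Sum>p\<leftarrow>gs. fst r * y * (emb (B (k * snd r) (fst p)) * snd p))"
    by (rule sum_list_swap)
  also have "\<dots> = higman_map gs (y * k)"
    unfolding higman_map_def
    by (simp add: case_prod_unfold sum_list_const_mult is_form_inverseD(1)[OF g] mult.assoc)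
  finally show ?thesis .
qed

lemma ell_eq_higman_map_inverse:
  assumes g: "is_form_inverse emb (\<lambda>a b. \<phi> (a * b)) g"
    and w: "w * w' = 1" "w' * w = 1"
    and gw: "is_form_inverse emb (\<lambda>a b. \<phi> (w * a * b)) gw"
  shows "ell gw = higman_map g w'"
proof -
  have "is_form_inverse emb (\<lambda>a b. \<phi> (w * a * b)) (map (\<lambda>(a, b). (a, w' * b)) g)"
    by (rule is_form_inverse_twist[OF g, where s = w]) (simp_all add: w mult.assoc emb_central)
  then show ?thesis
    using is_form_inverse_ell_unique[OF gw] by (simp add: ell_twist)
qed

end

locale uq_sl2_pbw = central_embedding emb for emb :: "complex \<Rightarrow> 'a::ring_1" +
  fixes n :: nat and q :: complex and K E F :: 'a
  assumes n_pos: "0 < n"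
    and q_root: "q ^ n = 1"
    and q_primitive: "\<And>k. 0 < k \<Longrightarrow> k < n \<Longrightarrow> q ^ k \<noteq> 1"
    and K_power_n: "K ^ n = 1"
    and EK: "E * K = emb q * K * E"
    and FK: "F * K = emb (inverse q) * K * F"
    and pbw_basis: "is_pbw_basis emb n K F E"
begin

abbreviation "monomial \<equiv> mono K F E"
abbreviation "coords \<equiv> coord emb n K F E"
abbreviation "integral \<equiv> integral_uq emb n K F E"

lemma finite_idx: "finite (idx n)"
  unfolding idx_def by simp

lemma coords_spec: "(\<forall>m. m \<notin> idx n \<longrightarrow> coords x m = 0) \<and> x = lincomb emb n K F E (coords x)"
proof -
  have "\<exists>!c. (\<forall>m. m \<notin> idx n \<longrightarrow> c m = 0) \<and> x = lincomb emb n K F E c"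
    using pbw_basis unfolding is_pbw_basis_def by blast
  then show ?thesis unfolding coord_def by (rule theI')
qed

lemma pbw_expansion: "x = (\<Sum>m\<in>idx n. emb (coords x m) * monomial m)"
  using coords_spec unfolding lincomb_def by blast

lemma coords_lincomb:
  assumes "\<forall>m. m \<notin> idx n \<longrightarrow> c m = 0"
  shows "coords (lincomb emb n K F E c) = c"
proof -
  have "\<exists>!c'. (\<forall>m. m \<notin> idx n \<longrightarrow> c' m = 0) \<and> lincomb emb n K F E c = lincomb emb n K F E c'"
    using pbw_basis unfolding is_pbw_basis_def by blast
  then show ?thesis unfolding coord_def
    by (rule the1_equality) (use assms in auto)
qed

lemma coords_add: "coords (x + y) = (\<lambda>m. coords x m + coords y m)"
proof -
  have "x + y = lincomb emb n K F E (\<lambda>m. coords x m + coords y m)"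
    unfolding lincomb_def
    by (subst (1 2) pbw_expansion) (simp add: emb_add distrib_right sum.distrib)
  then show ?thesis
    by (simp add: coords_lincomb coords_spec)
qed

lemma coords_smult: "coords (emb a * x) = (\<lambda>m. a * coords x m)"
proof -
  have "emb a * x = lincomb emb n K F E (\<lambda>m. a * coords x m)"
    unfolding lincomb_def
    by (subst pbw_expansion) (simp add: emb_mult sum_distrib_left mult.assoc)
  then show ?thesis
    by (simp add: coords_lincomb coords_spec)
qed

lemma coords_monomial:
  assumes "m \<in> idx n"
  shows "coords (monomial m) = (\<lambda>m'. if m' = m then 1 else 0)"
proof -
  have "lincomb emb n K F E (\<lambda>m'. if m' = m then 1 else 0)
      = (\<Sum>m'\<in>idx n. if m' = m then monomial m' else 0)"
    unfolding lincomb_def by (rule sum.cong) (simp_all add: emb_one emb_zero)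
  also have "\<dots> = monomial m"
    using assms finite_idx by simp
  finally have "lincomb emb n K F E (\<lambda>m'. if m' = m then 1 else 0) = monomial m" .
  then show ?thesis
    by (metis (mono_tags) assms coords_lincomb)
qed

lemma integral_add: "integral (x + y) = integral x + integral y"
  unfolding integral_uq_def by (simp add: coords_add)

lemma integral_smult: "integral (emb a * x) = a * integral x"
  unfolding integral_uq_def by (simp add: coords_smult)

lemma integral_sum: "finite A \<Longrightarrow> integral (\<Sum>a\<in>A. f a) = (\<Sum>a\<in>A. integral (f a))"
proof (induction A rule: finite_induct)
  case empty
  show ?case using integral_add[of 0 0] by simp
qed (simp add: integral_add)

lemma integral_monomial:
  "m \<in> idx n \<Longrightarrow> integral (monomial m) = (if m = (1, n - 1, n - 1) then 1 else 0)"
  unfolding integral_uq_def by (simp add: coords_monomial eq_commute)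

lemma q_nonzero: "q \<noteq> 0"
  using q_root n_pos by (metis power_0_left one_neq_zero not_gr0)

lemma q_power_inj:
  assumes "j < n" "k < n" "q ^ j = q ^ k"
  shows "j = k"
proof -
  have power_diff: "q ^ (b - a) = 1" if "a < b" "q ^ a = q ^ b" for a b
  proof -
    have "q ^ b = q ^ a * q ^ (b - a)"
      using that(1) by (simp add: power_add[symmetric])
    then show ?thesis using that(2) q_nonzero by simp
  qed
  show ?thesis
  proof (rule ccontr)
    assume "j \<noteq> k"
    then consider "j < k" | "k < j" by linarith
    then show False
      using power_diff[of j k] power_diff[of k j] assms q_primitive by cases auto
  qed
qed

lemma K_power_mod: "K ^ a = K ^ (a mod n)"
proof -
  have "K ^ a = K ^ (n * (a div n) + a mod n)"
    by simp
  also have "\<dots> = K ^ (a mod n)"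
    by (simp only: power_add power_mult K_power_n power_one mult_1_left)
  finally show ?thesis .
qed

lemma K_mult_monomial: "K * monomial (i, j, k) = monomial (Suc i mod n, j, k)"
  unfolding mono_def by (simp add: mult.assoc flip: K_power_mod)

lemma monomial_mult_K:
  "monomial (i, j, k) * K = emb (q ^ k / q ^ j) * (K * monomial (i, j, k))"
proof -
  have "monomial (i, j, k) * K = K ^ i * F ^ j * (E ^ k * K)"
    by (simp add: mono_def mult.assoc)
  also have "\<dots> = emb (q ^ k) * (K ^ i * (F ^ j * K) * E ^ k)"
    by (simp add: power_skew_commute[OF EK] mult.assoc mult_emb_left_commute)
  also have "\<dots> = emb (q ^ k) * (emb (inverse q ^ j) * (K ^ i * K * F ^ j * E ^ k))"
    by (simp add: power_skew_commute[OF FK] mult.assoc mult_emb_left_commute[of "K ^ i"])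
  also have "\<dots> = emb (q ^ k / q ^ j) * (K * monomial (i, j, k))"
    by (simp add: mono_def power_commutes emb_mult divide_inverse power_inverse mult.assoc)
  finally show ?thesis .
qed

lemma integral_monomial_mult_K:
  assumes m: "(i, j, k) \<in> idx n"
  shows "integral (monomial (i, j, k) * K) = integral (K * monomial (i, j, k))"
proof -
  have m': "(Suc i mod n, j, k) \<in> idx n"
    using m n_pos unfolding idx_def by simp
  show ?thesis
  proof (cases "j = k")
    case True
    then show ?thesis using q_nonzero by (simp add: monomial_mult_K emb_one)
  next
    case False
    then show ?thesis
      by (simp add: monomial_mult_K integral_smult K_mult_monomial integral_monomial[OF m'])
  qed
qed

lemma integral_mult_K_commute: "integral (x * K) = integral (K * x)"
proof -
  have "integral (x * K) = (\<Sum>m\<in>idx n. coords x m * integral (monomial m * K))"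
    by (subst pbw_expansion)
      (simp add: sum_distrib_right integral_sum finite_idx integral_smult mult.assoc)
  also have "\<dots> = (\<Sum>m\<in>idx n. coords x m * integral (K * monomial m))"
    by (rule sum.cong) (auto simp: integral_monomial_mult_K)
  also have "\<dots> = integral (K * x)"
    by (subst (2) pbw_expansion)
      (simp add: sum_distrib_left integral_sum finite_idx integral_smult mult_emb_left_commute)
  finally show ?thesis .
qed

lemma higman_map_monomial_off_diagonal:
  assumes g: "is_form_inverse emb (\<lambda>a b. integral (a * b)) g"
    and m: "(i, j, k) \<in> idx n" and jk: "j \<noteq> k"
  shows "higman_map g (monomial (i, j, k)) = 0"
proof -
  let ?x = "monomial (i + n - 1, j, k)"
  have Kx: "K * ?x = monomial (i, j, k)"
    using m n_pos unfolding idx_def by (simp add: K_mult_monomial)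
  have "higman_map g (K * ?x) = higman_map g (?x * K)"
    by (rule higman_map_commute[OF g]) (metis integral_mult_K_commute mult.assoc)
  then have "emb (q ^ k / q ^ j) * higman_map g (K * ?x) = higman_map g (K * ?x)"
    by (simp add: monomial_mult_K higman_map_smult)
  moreover have "q ^ k / q ^ j \<noteq> 1"
    using q_power_inj[of j k] m jk q_nonzero unfolding idx_def by auto
  ultimately show ?thesis
    using Kx emb_fixed_eq_zero by metis
qed

lemma higman_map_deg0:
  assumes g: "is_form_inverse emb (\<lambda>a b. integral (a * b)) g"
  shows "higman_map g (deg0 emb n K F E x) = higman_map g x"
proof -
  let ?D = "{m \<in> idx n. fst (snd m) = snd (snd m)}"
  let ?f = "\<lambda>m. emb (coords x m) * higman_map g (monomial m)"
  have "higman_map g (deg0 emb n K F E x) = (\<Sum>m\<in>?D. ?f m)"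
    unfolding deg0_def using finite_idx by (simp add: higman_map_sum higman_map_smult)
  also have "\<dots> = (\<Sum>m\<in>idx n. ?f m)"
  proof (rule sum.mono_neutral_left[OF finite_idx])
    show "\<forall>m\<in>idx n - ?D. ?f m = 0"
      using higman_map_monomial_off_diagonal[OF g] by force
  qed auto
  also have "\<dots> = higman_map g x"
    by (subst (2) pbw_expansion) (simp add: higman_map_sum finite_idx higman_map_smult)
  finally show ?thesis .
qed

end

theorem mainTheorem7:
  fixes n :: nat and q :: complex
    and emb :: "complex \<Rightarrow> 'a::ring_1" and K E F :: 'a
    and u u' v v' :: 'a and gu gv :: "('a \<times> 'a) list"
  assumes n2: "n \<ge> 2"
    and prim: "q ^ n = 1" "\<forall>k. 0 < k \<and> k < n \<longrightarrow> q ^ k \<noteq> 1"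
    and emb_add: "\<forall>x y. emb (x + y) = emb x + emb y"
    and emb_mult: "\<forall>x y. emb (x * y) = emb x * emb y"
    and emb_one: "emb 1 = 1"
    and emb_central: "\<forall>c a. emb c * a = a * emb c"
    and relK: "K ^ n = 1"
    and relE: "E ^ n = 0" and relF: "F ^ n = 0"
    and relEK: "E * K = emb q * K * E"
    and relFK: "F * K = emb (inverse q) * K * F"
    and relEF: "E * F - F * E = emb (1 / (q - inverse q)) * (K - K ^ (n - 1))"
    and basis: "is_pbw_basis emb n K F E"
    and u_inv: "u * u' = 1" "u' * u = 1"
    and v_inv: "v * v' = 1" "v' * v = 1"
    and same0: "deg0 emb n K F E u' = deg0 emb n K F E v'"
    and gu: "is_form_inverse emb (twform emb n K F E u) gu"
    and gv: "is_form_inverse emb (twform emb n K F E v) gv"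
  shows "ell gu = ell gv"
proof -
  interpret uq_sl2_pbw emb n q K E F
  proof unfold_locales
    show "0 < n" using n2 by simp
  qed (use prim emb_add emb_mult emb_one emb_central relK relEK relFK basis in blast)+
  have twform: "twform emb n K F E w = (\<lambda>a b. integral (w * a * b))" for w
    by (simp add: fun_eq_iff twform_def)
  define g where "g = map (\<lambda>(a, b). (a, u * b)) gu"
  have g: "is_form_inverse emb (\<lambda>a b. integral (a * b)) g"
    unfolding g_def using gu[unfolded twform]
    by (rule is_form_inverse_twist[where s = u'])
      (simp_all add: u_inv mult.assoc[symmetric] emb_central)
  have "ell gu = higman_map g u'"
    using g u_inv gu[unfolded twform] by (rule ell_eq_higman_map_inverse)
  also have "\<dots> = higman_map g v'"
    using higman_map_deg0[OF g] same0 by metis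
  also have "\<dots> = ell gv"
    using g v_inv gv[unfolded twform] by (rule ell_eq_higman_map_inverse[symmetric])
  finally show ?thesis .
qed

end
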